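(* Let $G=(V,E)$ be a connected simple undirected graph with $V=\{1,\dots,n\}$, let $c\in\mathbb{R}^n$ be a vector with all components strictly positive, and let $\rho>0$. Then there exist strictly positive edge weights $w_{ij}>0$, $\{i,j\}\in E$, such that the weighted adjacency matrix $A$ satisfies $Ac=\rho\,c$ (i.e. $c$ is an eigenvector centrality vector of $G$ for some positive weighting) if and only if $$\sum_{j\in S}c_j^2=\sum_{j\in N(S)}c_j^2\quad\text{for every } S\in\mathcal{S}_1,$$ and $$\sum_{j\in S}c_j^2<\sum_{j\in N(S)}c_j^2\quad\text{for every } S\in\mathcal{S}_2.$$
   Context: For positive edge weights $w_{ij}=w_{ji}$ ($\{i,j\}\in E$), the weighted adjacency matrix $A\in\mathbb{R}^{n\times n}$ has $a_{ij}=w_{ij}$ if $\{i,j\}\in E$ and $a_{ij}=0$ otherwise. For $S\subseteq V$, the external neighborhood is $N(S)=\{j\in V\setminus S:\ \exists\, i\in S \text{ with } \{i,j\}\in E\}$. A set $S\subseteq V$ is stable if no two elements of $S$ are joined by an edge. $\mathcal{S}_1$ is the family of nonempty stable sets $S\subseteq V$ such that there is no edge $\{k,\ell\}\in E$ with $k\notin S$ and $\ell\notin S$; $\mathcal{S}_2$ is the family of nonempty stable sets $S\subseteq V$ such that there exists an edge $\{k,\ell\}\in E$ with $k\notin S$ and $\ell\notin S$. *)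

theory Defs
  imports Complex_Main
begin

definition simple_graph :: "nat \<Rightarrow> nat set set \<Rightarrow> bool" where
  "simple_graph n E \<longleftrightarrow> (\<forall>e\<in>E. \<exists>i j. e = {i, j} \<and> i \<noteq> j \<and> i \<in> {1..n} \<and> j \<in> {1..n})"

definition adj :: "nat set set \<Rightarrow> nat \<Rightarrow> nat \<Rightarrow> bool" where
  "adj E i j \<longleftrightarrow> {i, j} \<in> E"

definition connected_graph :: "nat \<Rightarrow> nat set set \<Rightarrow> bool" where
  "connected_graph n E \<longleftrightarrow> {1..n} \<noteq> {} \<and>
     (\<forall>i\<in>{1..n}. \<forall>j\<in>{1..n}. (i, j) \<in> {(a, b). adj E a b}\<^sup>*)"

definition wadj :: "nat set set \<Rightarrow> (nat set \<Rightarrow> real) \<Rightarrow> nat \<Rightarrow> nat \<Rightarrow> real" where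
  "wadj E w i j = (if {i, j} \<in> E then w {i, j} else 0)"

definition ext_nbhd :: "nat \<Rightarrow> nat set set \<Rightarrow> nat set \<Rightarrow> nat set" where
  "ext_nbhd n E S = {j \<in> {1..n} - S. \<exists>i\<in>S. {i, j} \<in> E}"

definition stable :: "nat set set \<Rightarrow> nat set \<Rightarrow> bool" where
  "stable E S \<longleftrightarrow> (\<forall>i\<in>S. \<forall>j\<in>S. {i, j} \<notin> E)"

definition S1 :: "nat \<Rightarrow> nat set set \<Rightarrow> nat set set" where
  "S1 n E = {S. S \<subseteq> {1..n} \<and> S \<noteq> {} \<and> stable E S \<and>
     \<not> (\<exists>k l. {k, l} \<in> E \<and> k \<notin> S \<and> l \<notin> S)}"

definition S2 :: "nat \<Rightarrow> nat set set \<Rightarrow> nat set set" where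
  "S2 n E = {S. S \<subseteq> {1..n} \<and> S \<noteq> {} \<and> stable E S \<and>
     (\<exists>k l. {k, l} \<in> E \<and> k \<notin> S \<and> l \<notin> S)}"

end

theory Submission
  imports Defs "HOL-Analysis.Analysis"
begin

text \<open>
  Put \<open>x\<^sub>e = w\<^sub>e c\<^sub>i c\<^sub>j\<close> on each edge \<open>e = {i, j}\<close>. Multiplying row \<open>i\<close> of
  \<open>A c = \<rho> c\<close> by \<open>c\<^sub>i\<close> shows that the equation says exactly that the load
  \<open>\<Sum>\<^bsub>e \<ni> i\<^esub> x\<^sub>e\<close> at each vertex \<open>i\<close> is \<open>b\<^sub>i = \<rho> c\<^sub>i\<^sup>2\<close>. So the question is which
  vertex loads \<open>b\<close> are realised by a positive edge vector \<open>x\<close>.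

  Every edge meeting a stable set \<open>S\<close> has one end in \<open>S\<close> and the other in \<open>N(S)\<close>.
  Hence \<open>b(N(S)) - b(S)\<close> is the total weight of the edges that avoid \<open>S\<close> but meet
  \<open>N(S)\<close>. There are no such edges when \<open>S \<in> S1\<close>, and connectedness produces one
  when \<open>S \<in> S2\<close>. This gives necessity.

  For sufficiency, first find a nonnegative solution under the weak condition
  \<open>b(S) \<le> b(N(S))\<close>. To do this, minimise the squared residual \<open>r = load(x) - b\<close>
  over a box. Optimality gives \<open>r\<^sub>u + r\<^sub>v \<ge> 0\<close> on every edge, with equality where
  \<open>x\<^sub>e > 0\<close>, so \<open>r\<close> is orthogonal to \<open>load(x)\<close>. Peeling off the level sets of \<open>r\<close>
  shows that \<open>\<Sum> b\<^sub>i r\<^sub>i \<ge> 0\<close> for every such \<open>r\<close>. Together these give \<open>\<Sum> r\<^sub>i\<^sup>2 \<le> 0\<close>.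
  The strict inequalities for \<open>S2\<close> then leave room to subtract the loads of a
  small constant \<open>\<epsilon>\<close> on all edges, solve, and add \<open>\<epsilon>\<close> back.
\<close>

lemma simple_graph_edgeE:
  assumes "simple_graph n E" "e \<in> E"
  obtains i j where "e = {i, j}" "i \<noteq> j" "i \<in> {1..n}" "j \<in> {1..n}"
  using assms unfolding simple_graph_def by blast

lemma simple_graph_edgeD:
  assumes "simple_graph n E" "{i, j} \<in> E"
  shows "i \<noteq> j" "i \<in> {1..n}" "j \<in> {1..n}"
  using assms unfolding simple_graph_def by (metis doubleton_eq_iff)+

lemma simple_graph_edge_subset: "simple_graph n E \<Longrightarrow> e \<in> E \<Longrightarrow> e \<subseteq> {1..n}"
  by (auto elim: simple_graph_edgeE)

lemma simple_graph_finite: "simple_graph n E \<Longrightarrow> finite E"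
  by (metis simple_graph_edge_subset Pow_iff finite_Pow_iff finite_atLeastAtMost finite_subset subsetI)

lemma ext_nbhd_subset: "ext_nbhd n E S \<subseteq> {1..n}"
  unfolding ext_nbhd_def by auto

definition incident_sum :: "nat set set \<Rightarrow> (nat set \<Rightarrow> real) \<Rightarrow> nat \<Rightarrow> real" where
  "incident_sum E x i = (\<Sum>e\<in>{e\<in>E. i \<in> e}. x e)"

lemma incident_sum_cong:
  "(\<And>e. e \<in> E \<Longrightarrow> x e = x' e) \<Longrightarrow> incident_sum E x i = incident_sum E x' i"
  unfolding incident_sum_def by (rule sum.cong) auto

lemma sum_mult_incident_sum:
  assumes "finite A" "finite E"
  shows "(\<Sum>i\<in>A. h i * incident_sum E x i) = (\<Sum>e\<in>E. x e * sum h (A \<inter> e))"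
proof -
  have "(\<Sum>i\<in>A. h i * incident_sum E x i) = (\<Sum>i\<in>A. \<Sum>e\<in>E. if i \<in> e then h i * x e else 0)"
    unfolding incident_sum_def
    by (simp add: sum.inter_filter[OF assms(2)] sum_distrib_left if_distrib cong: if_cong)
  also have "\<dots> = (\<Sum>e\<in>E. \<Sum>i\<in>A. if i \<in> e then h i * x e else 0)"
    by (rule sum.swap)
  also have "\<dots> = (\<Sum>e\<in>E. x e * sum h (A \<inter> e))"
    by (simp add: sum.If_cases[OF assms(1)] sum_distrib_left ac_simps)
  finally show ?thesis .
qed

lemma sum_incident_sum:
  "finite A \<Longrightarrow> finite E \<Longrightarrow> sum (incident_sum E x) A = (\<Sum>e\<in>E. x e * card (A \<inter> e))"
  using sum_mult_incident_sum[where h = "\<lambda>_. 1"] by simp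

lemma simple_graph_sum_mult_incident_sum:
  assumes "simple_graph n E"
  shows "(\<Sum>i=1..n. h i * incident_sum E x i) = (\<Sum>e\<in>E. x e * sum h e)"
  using sum_mult_incident_sum[OF _ simple_graph_finite[OF assms]]
    simple_graph_edge_subset[OF assms]
  by (simp add: Int_absorb1)

section \<open>Stable sets and their neighbourhoods\<close>

lemma stable_edge_card:
  assumes sg: "simple_graph n E" and st: "stable E S" and e: "e \<in> E" "S \<inter> e \<noteq> {}"
  shows "card (S \<inter> e) = 1" "card (ext_nbhd n E S \<inter> e) = 1"
proof -
  obtain p q where pq: "e = {p, q}" "p \<in> S" "q \<in> {1..n}" "p \<noteq> q"
    using e by (elim simple_graph_edgeE[OF sg]) (auto simp: insert_commute)
  have "q \<notin> S" using st e pq unfolding stable_def by blast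
  then have "S \<inter> e = {p}" "ext_nbhd n E S \<inter> e = {q}"
    using pq e unfolding ext_nbhd_def by auto
  then show "card (S \<inter> e) = 1" "card (ext_nbhd n E S \<inter> e) = 1" by simp_all
qed

lemma sum_incident_sum_ext_nbhd:
  assumes sg: "simple_graph n E" and S: "S \<subseteq> {1..n}" "stable E S"
  shows "sum (incident_sum E x) (ext_nbhd n E S) = sum (incident_sum E x) S
           + (\<Sum>e\<in>{e\<in>E. S \<inter> e = {}}. x e * card (ext_nbhd n E S \<inter> e))"
proof -
  have fin: "finite E" "finite S" "finite (ext_nbhd n E S)"
    using simple_graph_finite[OF sg] finite_subset[OF S(1)] finite_subset[OF ext_nbhd_subset]
    by auto
  have "(\<Sum>e\<in>E. x e * card (ext_nbhd n E S \<inter> e)) = (\<Sum>e\<in>E. x e * card (S \<inter> e)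
          + (if S \<inter> e = {} then x e * card (ext_nbhd n E S \<inter> e) else 0))"
    using stable_edge_card[OF sg S(2)] by (intro sum.cong) auto
  then show ?thesis
    using fin by (simp add: sum_incident_sum sum.distrib sum.inter_filter)
qed

lemma S1_sum_incident_sum:
  assumes "simple_graph n E" "S \<in> S1 n E"
  shows "sum (incident_sum E x) (ext_nbhd n E S) = sum (incident_sum E x) S"
proof -
  have "S \<inter> e \<noteq> {}" if e: "e \<in> E" for e
  proof -
    obtain i j where "e = {i, j}"
      using simple_graph_edgeE[OF assms(1) e] by blast
    then show ?thesis using assms(2) e unfolding S1_def by blast
  qed
  then have no_edge: "{e\<in>E. S \<inter> e = {}} = {}"
    by blast
  have "S \<subseteq> {1..n}" "stable E S"
    using assms(2) unfolding S1_def by blast+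
  from sum_incident_sum_ext_nbhd[OF assms(1) this, of x] show ?thesis
    by (simp only: no_edge sum.empty add_0_right)
qed

lemma S2_edge_avoiding:
  assumes sg: "simple_graph n E" and cg: "connected_graph n E" and S: "S \<in> S2 n E"
  obtains e where "e \<in> E" "S \<inter> e = {}" "ext_nbhd n E S \<inter> e \<noteq> {}"
proof -
  let ?N = "ext_nbhd n E S"
  have "\<exists>e\<in>E. S \<inter> e = {} \<and> ?N \<inter> e \<noteq> {}"
  proof (rule ccontr)
    assume "\<not> ?thesis"
    then have meets: "S \<inter> e \<noteq> {}" if "e \<in> E" "?N \<inter> e \<noteq> {}" for e
      using that by blast
    obtain k l where kl: "{k, l} \<in> E" "k \<notin> S" "l \<notin> S"
      using S unfolding S2_def by blast
    obtain s where s: "s \<in> S" and "S \<subseteq> {1..n}"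
      using S unfolding S2_def by blast
    moreover have "k \<in> {1..n}"
      using simple_graph_edgeD[OF sg kl(1)] by simp
    ultimately have "(k, s) \<in> {(a, b). adj E a b}\<^sup>*"
      using cg unfolding connected_graph_def by blast
    then have "s \<notin> S \<union> ?N"
    proof (induction rule: rtrancl_induct)
      case base
      show ?case using meets[OF kl(1)] kl by auto
    next
      case (step z z')
      then have e: "{z, z'} \<in> E"
        unfolding adj_def by simp
      have "z \<in> {1..n}"
        using simple_graph_edgeD[OF sg e] by simp
      then have "z' \<notin> S"
        using step.IH e unfolding ext_nbhd_def by (auto simp: insert_commute)
      moreover have "z' \<notin> ?N"
        using meets[OF e] step.IH \<open>z' \<notin> S\<close> by auto
      ultimately show ?case by blast
    qed
    then show False using s by blast
  qed
  then show thesis using that by blast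
qed

lemma S2_sum_incident_sum_less:
  assumes sg: "simple_graph n E" and cg: "connected_graph n E" and S: "S \<in> S2 n E"
    and x: "\<And>e. e \<in> E \<Longrightarrow> 0 < x e"
  shows "sum (incident_sum E x) S < sum (incident_sum E x) (ext_nbhd n E S)"
proof -
  let ?N = "ext_nbhd n E S"
  obtain e where e: "e \<in> E" "S \<inter> e = {}" "?N \<inter> e \<noteq> {}"
    using S2_edge_avoiding[OF sg cg S] .
  have "card (?N \<inter> e) > 0"
    using e(3) finite_subset[OF ext_nbhd_subset] by (simp add: card_gt_0_iff)
  then have "0 < (\<Sum>e\<in>{e\<in>E. S \<inter> e = {}}. x e * card (?N \<inter> e))"
    using e x simple_graph_finite[OF sg] by (intro sum_pos2[of _ e]) (simp_all add: less_imp_le)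
  moreover have "S \<subseteq> {1..n}" "stable E S"
    using S unfolding S2_def by blast+
  ultimately show ?thesis
    using sum_incident_sum_ext_nbhd[OF sg, of S x] by simp
qed

section \<open>A dual inequality\<close>

definition hall_condition :: "nat \<Rightarrow> nat set set \<Rightarrow> (nat \<Rightarrow> real) \<Rightarrow> bool" where
  "hall_condition n E b \<longleftrightarrow>
     (\<forall>S. S \<subseteq> {1..n} \<longrightarrow> stable E S \<longrightarrow> sum b S \<le> sum b (ext_nbhd n E S))"

lemma hall_conditionD:
  "hall_condition n E b \<Longrightarrow> S \<subseteq> {1..n} \<Longrightarrow> stable E S \<Longrightarrow> sum b S \<le> sum b (ext_nbhd n E S)"
  unfolding hall_condition_def by blast

lemma hall_sum_sgn_nonneg:
  assumes b: "\<And>i. i \<in> {1..n} \<Longrightarrow> 0 \<le> b i" and hall: "hall_condition n E b"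
    and y: "\<And>u v. {u, v} \<in> E \<Longrightarrow> 0 \<le> y u + y v"
  shows "0 \<le> (\<Sum>i=1..n. b i * sgn (y i))"
proof -
  let ?S = "{i\<in>{1..n}. y i < 0}" and ?T = "{i\<in>{1..n}. 0 < y i}"
  have "stable E ?S"
    unfolding stable_def
  proof (intro ballI notI)
    fix i j assume "i \<in> ?S" "j \<in> ?S" "{i, j} \<in> E"
    then have "y i < 0" "y j < 0" "0 \<le> y i + y j"
      using y by blast+
    then show False by linarith
  qed
  then have "sum b ?S \<le> sum b (ext_nbhd n E ?S)"
    by (intro hall_conditionD[OF hall]) auto
  also have "\<dots> \<le> sum b ?T"
  proof (rule sum_mono2)
    show "ext_nbhd n E ?S \<subseteq> ?T"
    proof
      fix j assume "j \<in> ext_nbhd n E ?S"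
      then obtain i where "j \<in> {1..n}" "y i < 0" "{i, j} \<in> E"
        unfolding ext_nbhd_def by auto
      then show "j \<in> ?T" using y[of i j] by auto
    qed
  qed (use b in auto)
  also have "sum b ?T - sum b ?S
      = (\<Sum>i=1..n. (if 0 < y i then b i else 0) - (if y i < 0 then b i else 0))"
    by (simp only: sum_subtractf sum.inter_filter[OF finite_atLeastAtMost])
  also have "\<dots> = (\<Sum>i=1..n. b i * sgn (y i))"
    by (intro sum.cong) (auto simp: sgn_if)
  finally show ?thesis by simp
qed

lemma sgn_shift_sum_nonneg:
  fixes a b t :: real
  assumes "0 \<le> a + b" "a \<noteq> 0 \<Longrightarrow> t \<le> \<bar>a\<bar>" "b \<noteq> 0 \<Longrightarrow> t \<le> \<bar>b\<bar>"
  shows "0 \<le> (a - t * sgn a) + (b - t * sgn b)"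
  using assms
  by (cases a "0 :: real" rule: linorder_cases; cases b "0 :: real" rule: linorder_cases) auto

lemma hall_dual_nonneg:
  assumes sg: "simple_graph n E" and b: "\<And>i. i \<in> {1..n} \<Longrightarrow> 0 \<le> b i"
    and hall: "hall_condition n E b" and y: "\<And>u v. {u, v} \<in> E \<Longrightarrow> 0 \<le> y u + y v"
  shows "0 \<le> (\<Sum>i=1..n. b i * y i)"
  using y
proof (induction "card {i\<in>{1..n}. y i \<noteq> 0}" arbitrary: y rule: less_induct)
  case less
  let ?Z = "{i\<in>{1..n}. y i \<noteq> 0}"
  show ?case
  proof (cases "?Z = {}")
    case True
    then show ?thesis by (auto intro: sum.neutral)
  next
    case False
    define t where "t = Min ((\<lambda>i. \<bar>y i\<bar>) ` ?Z)"
    have "t \<in> (\<lambda>i. \<bar>y i\<bar>) ` ?Z"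
      unfolding t_def using False by (intro Min_in) auto
    then obtain i0 where i0: "i0 \<in> ?Z" "\<bar>y i0\<bar> = t"
      by auto
    have t_le: "t \<le> \<bar>y i\<bar>" if "i \<in> ?Z" for i
      using that unfolding t_def by simp
    have "t > 0" using i0 by auto
    define y' where "y' i = y i - t * sgn (y i)" for i
    have "0 \<le> y' u + y' v" if e: "{u, v} \<in> E" for u v
      unfolding y'_def using less.prems[OF e] t_le simple_graph_edgeD[OF sg e]
      by (intro sgn_shift_sum_nonneg) auto
    moreover have "card {i\<in>{1..n}. y' i \<noteq> 0} < card ?Z"
    proof -
      have "{i\<in>{1..n}. y' i \<noteq> 0} \<subseteq> ?Z - {i0}"
        using i0 unfolding y'_def by (auto simp: abs_mult_sgn)
      then have "card {i\<in>{1..n}. y' i \<noteq> 0} \<le> card (?Z - {i0})"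
        by (intro card_mono) auto
      also have "\<dots> < card ?Z"
        using i0(1) by (intro card_Diff1_less) auto
      finally show ?thesis .
    qed
    ultimately have "0 \<le> (\<Sum>i=1..n. b i * y' i)"
      using less.hyps by blast
    moreover have "0 \<le> (\<Sum>i=1..n. b i * sgn (y i))"
      by (intro hall_sum_sgn_nonneg[OF b hall] less.prems)
    moreover have "(\<Sum>i=1..n. b i * y i) = (\<Sum>i=1..n. b i * y' i) + t * (\<Sum>i=1..n. b i * sgn (y i))"
      unfolding y'_def by (simp add: algebra_simps sum.distrib sum_distrib_left sum_subtractf)
    ultimately show ?thesis
      using \<open>t > 0\<close> by simp
  qed
qed

section \<open>Nonnegative solutions by least squares\<close>

definition misfit :: "nat \<Rightarrow> nat set set \<Rightarrow> (nat \<Rightarrow> real) \<Rightarrow> (nat set \<Rightarrow> real) \<Rightarrow> real" where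
  "misfit n E b x = (\<Sum>i=1..n. (incident_sum E x i - b i)\<^sup>2)"

lemma incident_sum_update:
  assumes "finite E" "e \<in> E"
  shows "incident_sum E (x(e := x e + t)) i = incident_sum E x i + (if i \<in> e then t else 0)"
proof -
  have "x(e := x e + t) = (\<lambda>e'. x e' + (if e' = e then t else 0))"
    by auto
  then show ?thesis
    using assms unfolding incident_sum_def by (simp add: sum.distrib sum.delta)
qed

lemma incident_sum_ge:
  assumes "finite E" "\<And>e. e \<in> E \<Longrightarrow> 0 \<le> x e" "e \<in> E" "i \<in> e"
  shows "x e \<le> incident_sum E x i"
  unfolding incident_sum_def using assms by (intro member_le_sum) auto

lemma misfit_update:
  assumes sg: "simple_graph n E" and e: "{u, v} \<in> E"
  shows "misfit n E b (x({u, v} := x {u, v} + t)) = misfit n E b x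
           + 2 * (t * ((incident_sum E x u - b u) + (incident_sum E x v - b v) + t))"
proof -
  define r where "r i = incident_sum E x i - b i" for i
  have uv: "u \<noteq> v" "u \<in> {1..n}" "v \<in> {1..n}"
    using simple_graph_edgeD[OF sg e] by auto
  have "misfit n E b (x({u, v} := x {u, v} + t)) = (\<Sum>i=1..n. (r i + (if i \<in> {u, v} then t else 0))\<^sup>2)"
    unfolding misfit_def r_def incident_sum_update[OF simple_graph_finite[OF sg] e]
    by (simp add: algebra_simps)
  also have "\<dots> = (\<Sum>i=1..n. (r i)\<^sup>2 + (if i \<in> {u, v} then 2 * t * r i + t\<^sup>2 else 0))"
    by (intro sum.cong) (auto simp: power2_eq_square algebra_simps)
  also have "\<dots> = misfit n E b x + (\<Sum>i\<in>{u, v}. 2 * t * r i + t\<^sup>2)"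
    using uv unfolding misfit_def r_def
    by (simp only: sum.distrib sum.inter_restrict[OF finite_atLeastAtMost, symmetric]) (simp add: Int_absorb1)
  finally show ?thesis
    using uv unfolding r_def by (simp add: power2_eq_square algebra_simps)
qed

lemma misfit_minimizer_exists:
  assumes "0 \<le> B"
  obtains x where "\<And>e. x e \<in> {0..B}"
    and "\<And>z. (\<And>e. z e \<in> {0..B}) \<Longrightarrow> misfit n E b x \<le> misfit n E b z"
proof -
  let ?X = "PiE UNIV (\<lambda>_. {0..B})"
  have X_iff: "z \<in> ?X \<longleftrightarrow> (\<forall>e. z e \<in> {0..B})" for z :: "nat set \<Rightarrow> real"
    by (simp add: PiE_iff)
  have "compactin (product_topology (\<lambda>_. euclideanreal) UNIV) ?X"
    by (simp add: compactin_PiE)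
  then have compact: "compact ?X"
    by (simp add: euclidean_product_topology)
  have nonempty: "?X \<noteq> {}"
    using assms X_iff[of "\<lambda>_. 0"] by auto
  have cont: "continuous_on ?X (misfit n E b)"
    unfolding misfit_def incident_sum_def
    by (intro continuous_intros continuous_on_subset[OF continuous_on_product_coordinates]) auto
  obtain x where "x \<in> ?X" "\<forall>z\<in>?X. misfit n E b x \<le> misfit n E b z"
    using continuous_attains_inf[OF compact nonempty cont] by auto
  then show thesis
    using that X_iff by metis
qed

lemma interval_min_at_zero_quadratic:
  fixes g lo hi :: real
  assumes "lo \<le> 0" "0 \<le> hi" and min: "\<And>t. lo \<le> t \<Longrightarrow> t \<le> hi \<Longrightarrow> 0 \<le> t * (g + t)"
  shows "0 < hi \<Longrightarrow> 0 \<le> g" and "lo < 0 \<Longrightarrow> g \<le> 0"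
proof -
  show "0 \<le> g" if "0 < hi"
  proof (rule ccontr)
    assume "\<not> 0 \<le> g"
    define t where "t = min (- g / 2) hi"
    have "t * (g + t) < 0"
      using that \<open>\<not> 0 \<le> g\<close> unfolding t_def by (intro mult_pos_neg) auto
    moreover have "0 \<le> t * (g + t)"
      using min assms that \<open>\<not> 0 \<le> g\<close> unfolding t_def by auto
    ultimately show False by simp
  qed
  show "g \<le> 0" if "lo < 0"
  proof (rule ccontr)
    assume "\<not> g \<le> 0"
    define t where "t = max (- g / 2) lo"
    have "t * (g + t) < 0"
      using that \<open>\<not> g \<le> 0\<close> unfolding t_def by (intro mult_neg_pos) auto
    moreover have "0 \<le> t * (g + t)"
      using min assms that \<open>\<not> g \<le> 0\<close> unfolding t_def by auto
    ultimately show False by simp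
  qed
qed

lemma misfit_minimizer_edge_conditions:
  assumes sg: "simple_graph n E" and b: "\<And>i. i \<in> {1..n} \<Longrightarrow> b i < B"
    and box: "\<And>e. x e \<in> {0..B}"
    and min: "\<And>z. (\<And>e. z e \<in> {0..B}) \<Longrightarrow> misfit n E b x \<le> misfit n E b z"
    and e: "{u, v} \<in> E"
  defines "g \<equiv> (incident_sum E x u - b u) + (incident_sum E x v - b v)"
  shows "0 \<le> g" and "0 < x {u, v} \<Longrightarrow> g \<le> 0"
proof -
  let ?e = "{u, v}"
  have quad: "0 \<le> t * (g + t)" if "- x ?e \<le> t" "t \<le> B - x ?e" for t
  proof -
    have "misfit n E b x \<le> misfit n E b (x(?e := x ?e + t))"
      using box that by (intro min) auto
    then show ?thesis
      unfolding misfit_update[OF sg e] g_def by simp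
  qed
  have bounds: "- x ?e \<le> 0" "0 \<le> B - x ?e"
    using box[of ?e] by auto
  show "g \<le> 0" if "0 < x ?e"
    using interval_min_at_zero_quadratic(2)[OF bounds quad] that by simp
  show "0 \<le> g"
  proof (cases "x ?e < B")
    case True
    then show ?thesis
      using interval_min_at_zero_quadratic(1)[OF bounds quad] by simp
  next
    case False
    \<comment> \<open>on the upper face of the box both residuals are positive, since \<open>B\<close> exceeds every \<open>b\<^sub>i\<close>\<close>
    have "x ?e \<le> incident_sum E x i" if "i \<in> ?e" for i
      using that box e simple_graph_finite[OF sg] by (intro incident_sum_ge) auto
    then have "x ?e \<le> incident_sum E x u" "x ?e \<le> incident_sum E x v"
      by simp_all
    moreover have "b u < x ?e" "b v < x ?e"
      using False box[of ?e] b simple_graph_edgeD[OF sg e] by (auto simp: not_less)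
    ultimately show ?thesis
      unfolding g_def by linarith
  qed
qed

lemma misfit_minimizer_solves:
  assumes sg: "simple_graph n E" and b: "\<And>i. i \<in> {1..n} \<Longrightarrow> 0 \<le> b i"
    and hall: "hall_condition n E b" and b_less: "\<And>i. i \<in> {1..n} \<Longrightarrow> b i < B"
    and box: "\<And>e. x e \<in> {0..B}"
    and min: "\<And>z. (\<And>e. z e \<in> {0..B}) \<Longrightarrow> misfit n E b x \<le> misfit n E b z"
    and i: "i \<in> {1..n}"
  shows "incident_sum E x i = b i"
proof -
  define r where "r i = incident_sum E x i - b i" for i
  have edge: "0 \<le> r u + r v" "0 < x {u, v} \<Longrightarrow> r u + r v \<le> 0" if "{u, v} \<in> E" for u v
    unfolding r_def
    using misfit_minimizer_edge_conditions[where b = b and B = B and x = x, OF sg _ _ _ that]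
      b_less box min by blast+
  have "(\<Sum>i=1..n. r i * incident_sum E x i) = (\<Sum>e\<in>E. x e * sum r e)"
    by (rule simple_graph_sum_mult_incident_sum[OF sg])
  also have "\<dots> = 0"
  proof (rule sum.neutral, rule ballI)
    fix e assume "e \<in> E"
    then obtain u v where uv: "e = {u, v}" "u \<noteq> v" "{u, v} \<in> E"
      by (metis simple_graph_edgeE[OF sg])
    show "x e * sum r e = 0"
      using edge[OF uv(3)] box[of e] uv by (cases "x e = 0") auto
  qed
  finally have "(\<Sum>i=1..n. r i * incident_sum E x i) = 0" .
  moreover have "0 \<le> (\<Sum>i=1..n. b i * r i)"
    using edge(1) by (intro hall_dual_nonneg[OF sg b hall])
  moreover have "(\<Sum>i=1..n. (r i)\<^sup>2) = (\<Sum>i=1..n. r i * incident_sum E x i) - (\<Sum>i=1..n. b i * r i)"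
    unfolding r_def by (simp add: sum_subtractf[symmetric] power2_eq_square algebra_simps)
  moreover have "0 \<le> (\<Sum>i=1..n. (r i)\<^sup>2)"
    by (simp add: sum_nonneg)
  ultimately have "(\<Sum>i=1..n. (r i)\<^sup>2) = 0"
    by linarith
  then have "r i = 0"
    using i by (simp add: sum_nonneg_eq_0_iff)
  then show ?thesis
    unfolding r_def by simp
qed

lemma hall_imp_nonneg_edge_flow:
  assumes sg: "simple_graph n E" and b: "\<And>i. i \<in> {1..n} \<Longrightarrow> 0 \<le> b i"
    and hall: "hall_condition n E b"
  obtains x where "\<And>e. e \<in> E \<Longrightarrow> 0 \<le> x e" "\<And>i. i \<in> {1..n} \<Longrightarrow> incident_sum E x i = b i"
proof -
  define B where "B = sum b {1..n} + 1"
  have b_less: "b i < B" if "i \<in> {1..n}" for i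
  proof -
    have "b i \<le> sum b {1..n}"
      using that b by (intro member_le_sum) auto
    then show ?thesis unfolding B_def by simp
  qed
  have "0 \<le> sum b {1..n}"
    using b by (intro sum_nonneg) auto
  then have "0 \<le> B"
    unfolding B_def by simp
  then obtain x where box: "\<And>e. x e \<in> {0..B}"
    and min: "\<And>z. (\<And>e. z e \<in> {0..B}) \<Longrightarrow> misfit n E b x \<le> misfit n E b z"
    using misfit_minimizer_exists by blast
  show thesis
  proof (rule that)
    show "0 \<le> x e" for e
      using box[of e] by simp
    show "incident_sum E x i = b i" if "i \<in> {1..n}" for i
      by (rule misfit_minimizer_solves[OF sg _ hall, where B = B and x = x])
        (fact b b_less box min that)+
  qed
qed

section \<open>Positive solutions and eigenvector weights\<close>

lemma finite_S2: "finite (S2 n E)"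
  by (rule finite_subset[of _ "Pow {1..n}"]) (auto simp: S2_def)

lemma eventually_at_right_0_mult_less:
  fixes a c :: real
  assumes "0 < c"
  shows "\<forall>\<^sub>F \<epsilon> in at_right 0. \<epsilon> * a < c"
proof (rule order_tendstoD(2)[OF _ assms])
  show "((\<lambda>\<epsilon>. \<epsilon> * a) \<longlongrightarrow> 0) (at_right 0)"
    by (intro tendsto_mult_left_zero tendsto_ident_at)
qed

lemma hall_condition_diff_incident_sum:
  assumes sg: "simple_graph n E"
    and S1: "\<forall>S\<in>S1 n E. sum b S = sum b (ext_nbhd n E S)"
    and S2: "\<forall>S\<in>S2 n E. sum (incident_sum E x) (ext_nbhd n E S) - sum (incident_sum E x) S
                         \<le> sum b (ext_nbhd n E S) - sum b S"
  shows "hall_condition n E (\<lambda>i. b i - incident_sum E x i)"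
  unfolding hall_condition_def
proof (intro allI impI)
  fix S assume "S \<subseteq> {1..n}" "stable E S"
  then consider "S = {}" | "S \<in> S1 n E" | "S \<in> S2 n E"
    unfolding S1_def S2_def by auto
  then show "(\<Sum>i\<in>S. b i - incident_sum E x i) \<le> (\<Sum>i\<in>ext_nbhd n E S. b i - incident_sum E x i)"
  proof cases
    case 1
    then show ?thesis by (simp add: ext_nbhd_def)
  next
    case 2
    then show ?thesis
      using bspec[OF S1 2] S1_sum_incident_sum[OF sg 2, of x] by (simp add: sum_subtractf)
  next
    case 3
    then show ?thesis
      using bspec[OF S2 3] by (simp add: sum_subtractf algebra_simps)
  qed
qed

lemma hall_imp_positive_edge_flow:
  assumes sg: "simple_graph n E" and b: "\<forall>i\<in>{1..n}. 0 < b i"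
    and S1: "\<forall>S\<in>S1 n E. sum b S = sum b (ext_nbhd n E S)"
    and S2: "\<forall>S\<in>S2 n E. sum b S < sum b (ext_nbhd n E S)"
  obtains x where "\<And>e. e \<in> E \<Longrightarrow> 0 < x e" "\<And>i. i \<in> {1..n} \<Longrightarrow> incident_sum E x i = b i"
proof -
  define deg where "deg = incident_sum E (\<lambda>_. 1)"
  have load_const: "incident_sum E (\<lambda>_. \<epsilon>) = (\<lambda>i. \<epsilon> * deg i)" for \<epsilon>
    unfolding deg_def incident_sum_def by (simp add: mult.commute)
  have "\<forall>\<^sub>F \<epsilon> in at_right 0. 0 < \<epsilon> \<and> (\<forall>i\<in>{1..n}. \<epsilon> * deg i < b i) \<and>
      (\<forall>S\<in>S2 n E. \<epsilon> * (sum deg (ext_nbhd n E S) - sum deg S) < sum b (ext_nbhd n E S) - sum b S)"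
    using b S2 finite_S2
    by (intro eventually_conj eventually_at_right_less eventually_ball_finite ballI
        eventually_at_right_0_mult_less) auto
  then obtain \<epsilon> where \<epsilon>: "0 < \<epsilon>" "\<forall>i\<in>{1..n}. \<epsilon> * deg i < b i"
    "\<forall>S\<in>S2 n E. \<epsilon> * (sum deg (ext_nbhd n E S) - sum deg S) < sum b (ext_nbhd n E S) - sum b S"
    using eventually_happens'[OF trivial_limit_at_right_real] by blast
  have gap_le: "\<forall>S\<in>S2 n E. sum (incident_sum E (\<lambda>_. \<epsilon>)) (ext_nbhd n E S) - sum (incident_sum E (\<lambda>_. \<epsilon>)) S
      \<le> sum b (ext_nbhd n E S) - sum b S"
    using \<epsilon>(3) unfolding load_const
    by (simp add: sum_distrib_left[symmetric] right_diff_distrib less_imp_le)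
  define b' where "b' = (\<lambda>i. b i - incident_sum E (\<lambda>_. \<epsilon>) i)"
  have "hall_condition n E b'"
    unfolding b'_def by (rule hall_condition_diff_incident_sum[OF sg S1 gap_le])
  moreover have "0 \<le> b' i" if "i \<in> {1..n}" for i
    using \<epsilon>(2) that unfolding b'_def load_const by (simp add: less_imp_le)
  ultimately obtain x where x: "\<And>e. e \<in> E \<Longrightarrow> 0 \<le> x e"
    and x_sum: "\<And>i. i \<in> {1..n} \<Longrightarrow> incident_sum E x i = b' i"
    using hall_imp_nonneg_edge_flow[OF sg] by blast
  show thesis
  proof (rule that)
    show "0 < x e + \<epsilon>" if "e \<in> E" for e
      using x[OF that] \<epsilon>(1) by simp
    show "incident_sum E (\<lambda>e. x e + \<epsilon>) i = b i" if "i \<in> {1..n}" for i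
      using x_sum[OF that] unfolding b'_def incident_sum_def by (simp add: sum.distrib)
  qed
qed

lemma positive_edge_flow_iff:
  assumes sg: "simple_graph n E" and cg: "connected_graph n E"
    and b: "\<forall>i\<in>{1..n}. 0 < b i"
  shows "(\<exists>x. (\<forall>e\<in>E. 0 < x e) \<and> (\<forall>i\<in>{1..n}. incident_sum E x i = b i)) \<longleftrightarrow>
         (\<forall>S\<in>S1 n E. sum b S = sum b (ext_nbhd n E S)) \<and>
         (\<forall>S\<in>S2 n E. sum b S < sum b (ext_nbhd n E S))"
proof
  assume "\<exists>x. (\<forall>e\<in>E. 0 < x e) \<and> (\<forall>i\<in>{1..n}. incident_sum E x i = b i)"
  then obtain x where x: "\<And>e. e \<in> E \<Longrightarrow> 0 < x e"
    and x_sum: "\<And>i. i \<in> {1..n} \<Longrightarrow> incident_sum E x i = b i"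
    by blast
  have sum_b: "sum b A = sum (incident_sum E x) A" if "A \<subseteq> {1..n}" for A
    using that x_sum by (intro sum.cong) auto
  have sum_b_ext: "sum b (ext_nbhd n E S) = sum (incident_sum E x) (ext_nbhd n E S)" for S
    using sum_b[OF ext_nbhd_subset] .
  show "(\<forall>S\<in>S1 n E. sum b S = sum b (ext_nbhd n E S)) \<and>
        (\<forall>S\<in>S2 n E. sum b S < sum b (ext_nbhd n E S))"
  proof (intro conjI ballI)
    fix S assume "S \<in> S1 n E"
    then show "sum b S = sum b (ext_nbhd n E S)"
      using sum_b[of S] sum_b_ext S1_sum_incident_sum[OF sg] unfolding S1_def by simp
  next
    fix S assume "S \<in> S2 n E"
    then show "sum b S < sum b (ext_nbhd n E S)"
      using sum_b[of S] sum_b_ext S2_sum_incident_sum_less[OF sg cg _ x] unfolding S2_def by simp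
  qed
next
  assume "(\<forall>S\<in>S1 n E. sum b S = sum b (ext_nbhd n E S)) \<and>
          (\<forall>S\<in>S2 n E. sum b S < sum b (ext_nbhd n E S))"
  then obtain x where "\<And>e. e \<in> E \<Longrightarrow> 0 < x e" "\<And>i. i \<in> {1..n} \<Longrightarrow> incident_sum E x i = b i"
    using hall_imp_positive_edge_flow[OF sg b] by (elim conjE) blast
  then show "\<exists>x. (\<forall>e\<in>E. 0 < x e) \<and> (\<forall>i\<in>{1..n}. incident_sum E x i = b i)"
    by blast
qed

lemma wadj_row_mult_eq_incident_sum:
  assumes sg: "simple_graph n E" and i: "i \<in> {1..n}"
  shows "(\<Sum>j=1..n. wadj E w i j * c j) * c i = incident_sum E (\<lambda>e. w e * prod c e) i"
proof -
  let ?J = "{j\<in>{1..n}. {i, j} \<in> E}"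
  have ij: "i \<noteq> j" if "j \<in> ?J" for j
    using that simple_graph_edgeD[OF sg] by blast
  have bij: "bij_betw (\<lambda>j. {i, j}) ?J {e\<in>E. i \<in> e}"
  proof (rule bij_betw_imageI)
    show "inj_on (\<lambda>j. {i, j}) ?J"
      using ij by (auto intro!: inj_onI simp: doubleton_eq_iff)
    show "(\<lambda>j. {i, j}) ` ?J = {e\<in>E. i \<in> e}"
    proof (intro equalityI subsetI)
      fix e assume e: "e \<in> {e\<in>E. i \<in> e}"
      then obtain p q where pq: "e = {p, q}" "p \<in> {1..n}" "q \<in> {1..n}"
        using simple_graph_edgeE[OF sg] by blast
      with e have "e = {i, if i = p then q else p}" "{i, if i = p then q else p} \<in> E"
        by (auto simp: insert_commute)
      with pq show "e \<in> (\<lambda>j. {i, j}) ` ?J" by fastforce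
    qed auto
  qed
  have "incident_sum E (\<lambda>e. w e * prod c e) i = (\<Sum>j\<in>?J. w {i, j} * prod c {i, j})"
    unfolding incident_sum_def using sum.reindex_bij_betw[OF bij, of "\<lambda>e. w e * prod c e"] by simp
  also have "\<dots> = (\<Sum>j\<in>?J. w {i, j} * c j * c i)"
    using ij by (intro sum.cong) auto
  also have "\<dots> = (\<Sum>j=1..n. if {i, j} \<in> E then w {i, j} * c j * c i else 0)"
    by (simp only: sum.inter_filter[OF finite_atLeastAtMost])
  also have "\<dots> = (\<Sum>j=1..n. wadj E w i j * c j) * c i"
    unfolding wadj_def sum_distrib_right by (intro sum.cong) auto
  finally show ?thesis ..
qed

lemma eigenvector_weights_iff_edge_flow:
  assumes sg: "simple_graph n E" and c: "\<forall>i\<in>{1..n}. 0 < c i"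
  shows "(\<exists>w. (\<forall>e\<in>E. 0 < w e) \<and> (\<forall>i\<in>{1..n}. (\<Sum>j=1..n. wadj E w i j * c j) = \<rho> * c i)) \<longleftrightarrow>
         (\<exists>x. (\<forall>e\<in>E. 0 < x e) \<and> (\<forall>i\<in>{1..n}. incident_sum E x i = \<rho> * (c i)\<^sup>2))"
proof -
  have prod_c: "0 < prod c e" if "e \<in> E" for e
    using simple_graph_edge_subset[OF sg that] c by (intro prod_pos) auto
  have row_iff: "(\<Sum>j=1..n. wadj E w i j * c j) = \<rho> * c i \<longleftrightarrow>
      incident_sum E (\<lambda>e. w e * prod c e) i = \<rho> * (c i)\<^sup>2" if "i \<in> {1..n}" for w i
  proof -
    have "c i \<noteq> 0"
      using c that by (simp add: less_imp_neq[symmetric])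
    then show ?thesis
      unfolding wadj_row_mult_eq_incident_sum[OF sg that, of w c, symmetric]
      by (simp add: power2_eq_square mult.assoc[symmetric])
  qed
  show ?thesis
  proof
    assume "\<exists>w. (\<forall>e\<in>E. 0 < w e) \<and> (\<forall>i\<in>{1..n}. (\<Sum>j=1..n. wadj E w i j * c j) = \<rho> * c i)"
    then obtain w where "\<forall>e\<in>E. 0 < w e" "\<forall>i\<in>{1..n}. (\<Sum>j=1..n. wadj E w i j * c j) = \<rho> * c i"
      by blast
    then show "\<exists>x. (\<forall>e\<in>E. 0 < x e) \<and> (\<forall>i\<in>{1..n}. incident_sum E x i = \<rho> * (c i)\<^sup>2)"
      using row_iff prod_c by (intro exI[of _ "\<lambda>e. w e * prod c e"]) auto
  next
    assume "\<exists>x. (\<forall>e\<in>E. 0 < x e) \<and> (\<forall>i\<in>{1..n}. incident_sum E x i = \<rho> * (c i)\<^sup>2)"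
    then obtain x where x: "\<forall>e\<in>E. 0 < x e" "\<forall>i\<in>{1..n}. incident_sum E x i = \<rho> * (c i)\<^sup>2"
      by blast
    define w where "w e = x e / prod c e" for e
    have "incident_sum E (\<lambda>e. w e * prod c e) i = incident_sum E x i" for i
      using prod_c unfolding w_def by (intro incident_sum_cong) (simp add: less_imp_neq[symmetric])
    then show "\<exists>w. (\<forall>e\<in>E. 0 < w e) \<and> (\<forall>i\<in>{1..n}. (\<Sum>j=1..n. wadj E w i j * c j) = \<rho> * c i)"
      using x row_iff prod_c unfolding w_def by (intro exI[of _ w]) (auto simp: w_def)
  qed
qed

theorem theorem1:
  fixes n :: nat and E :: "nat set set" and c :: "nat \<Rightarrow> real" and \<rho> :: real
  assumes "simple_graph n E" and "connected_graph n E"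
    and "\<forall>i\<in>{1..n}. c i > 0" and "\<rho> > 0"
  shows "(\<exists>w :: nat set \<Rightarrow> real. (\<forall>e\<in>E. w e > 0) \<and>
            (\<forall>i\<in>{1..n}. (\<Sum>j=1..n. wadj E w i j * c j) = \<rho> * c i))
         \<longleftrightarrow>
         ((\<forall>S\<in>S1 n E. (\<Sum>j\<in>S. (c j)\<^sup>2) = (\<Sum>j\<in>ext_nbhd n E S. (c j)\<^sup>2)) \<and>
          (\<forall>S\<in>S2 n E. (\<Sum>j\<in>S. (c j)\<^sup>2) < (\<Sum>j\<in>ext_nbhd n E S. (c j)\<^sup>2)))"
proof -
  have b: "\<forall>i\<in>{1..n}. 0 < \<rho> * (c i)\<^sup>2"
    using assms(3,4) by (simp add: less_imp_neq[symmetric])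
  have sum_b: "(\<Sum>j\<in>A. \<rho> * (c j)\<^sup>2) = \<rho> * (\<Sum>j\<in>A. (c j)\<^sup>2)" for A
    by (simp add: sum_distrib_left)
  show ?thesis
    unfolding eigenvector_weights_iff_edge_flow[OF assms(1,3)]
      positive_edge_flow_iff[OF assms(1,2) b] sum_b
    using assms(4) by simp
qed

end
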